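(* Let $m\ge 2$ and let $n_1,\dots,n_m\ge 4$ be even. Then the strong metric dimension of the even chain cycle satisfies $$sdim(\mathcal{C}(C_{n_1},\dots,C_{n_m}))=1+\sum_{i=1}^{m}\frac{n_i-2}{2}.$$
   Context: Let $C_{n_1},\dots,C_{n_m}$ be pairwise disjoint cycles, $V(C_{n_i})=\{v^i_1,\dots,v^i_{n_i}\}$ with $v^i_j$ adjacent to $v^i_{j+1}$ (indices mod $n_i$). The even chain cycle (all $n_i$ even) is obtained by identifying $v^i_{n_i/2+1}$ with $v^{i+1}_1$ for $i=1,\dots,m-1$. A vertex $w$ strongly resolves distinct vertices $u,v$ if $u$ lies on some shortest $v$–$w$ path or $v$ lies on some shortest $u$–$w$ path. A set $W\subseteq V(G)$ is a strong resolving set if every pair of distinct vertices is strongly resolved by some $w\in W$; $sdim(G)$ is the minimum size of a strong resolving set. *)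

theory Defs
  imports Main
begin

definition walk :: "('a \<Rightarrow> 'a \<Rightarrow> bool) \<Rightarrow> 'a list \<Rightarrow> bool" where
  "walk E xs \<longleftrightarrow> xs \<noteq> [] \<and> (\<forall>k. Suc k < length xs \<longrightarrow> E (xs ! k) (xs ! Suc k))"

definition gdist :: "'a set \<Rightarrow> ('a \<Rightarrow> 'a \<Rightarrow> bool) \<Rightarrow> 'a \<Rightarrow> 'a \<Rightarrow> nat" where
  "gdist V E u v = (LEAST k. \<exists>xs. walk E xs \<and> set xs \<subseteq> V \<and> hd xs = u \<and> last xs = v
                                    \<and> length xs = Suc k)"

definition shortest_path :: "'a set \<Rightarrow> ('a \<Rightarrow> 'a \<Rightarrow> bool) \<Rightarrow> 'a \<Rightarrow> 'a \<Rightarrow> 'a list \<Rightarrow> bool" where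
  "shortest_path V E u v p \<longleftrightarrow> walk E p \<and> set p \<subseteq> V \<and> hd p = u \<and> last p = v
                                \<and> length p = Suc (gdist V E u v)"

definition strongly_resolves ::
  "'a set \<Rightarrow> ('a \<Rightarrow> 'a \<Rightarrow> bool) \<Rightarrow> 'a \<Rightarrow> 'a \<Rightarrow> 'a \<Rightarrow> bool" where
  "strongly_resolves V E w u v \<longleftrightarrow>
     (\<exists>p. shortest_path V E v w p \<and> u \<in> set p) \<or> (\<exists>p. shortest_path V E u w p \<and> v \<in> set p)"

definition strong_resolving_set :: "'a set \<Rightarrow> ('a \<Rightarrow> 'a \<Rightarrow> bool) \<Rightarrow> 'a set \<Rightarrow> bool" where
  "strong_resolving_set V E W \<longleftrightarrow> W \<subseteq> V \<and>
     (\<forall>u\<in>V. \<forall>v\<in>V. u \<noteq> v \<longrightarrow> (\<exists>w\<in>W. strongly_resolves V E w u v))"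

definition sdim :: "'a set \<Rightarrow> ('a \<Rightarrow> 'a \<Rightarrow> bool) \<Rightarrow> nat" where
  "sdim V E = (LEAST k. \<exists>W. strong_resolving_set V E W \<and> finite W \<and> card W = k)"

(* Vertex v^i_j is the pair (i,j),
   1 <= i <= m, 1 <= j <= n i.  The identification of v^i_{n_i/2+1} with v^{i+1}_1
   is realised by the representative map chain_rep, sending (i+1,1) to (i, n_i/2+1). *)
definition chain_rep :: "(nat \<Rightarrow> nat) \<Rightarrow> nat \<times> nat \<Rightarrow> nat \<times> nat" where
  "chain_rep n p = (if 2 \<le> fst p \<and> snd p = 1 then (fst p - 1, n (fst p - 1) div 2 + 1) else p)"

definition chain_V :: "nat \<Rightarrow> (nat \<Rightarrow> nat) \<Rightarrow> (nat \<times> nat) set" where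
  "chain_V m n = chain_rep n ` {(i, j). 1 \<le> i \<and> i \<le> m \<and> 1 \<le> j \<and> j \<le> n i}"

definition chain_E :: "nat \<Rightarrow> (nat \<Rightarrow> nat) \<Rightarrow> nat \<times> nat \<Rightarrow> nat \<times> nat \<Rightarrow> bool" where
  "chain_E m n a b \<longleftrightarrow> (\<exists>i j. 1 \<le> i \<and> i \<le> m \<and> 1 \<le> j \<and> j \<le> n i \<and>
       {a, b} = {chain_rep n (i, j), chain_rep n (i, j mod n i + 1)})"

end

theory Submission
  imports Defs
begin

text \<open>A vertex set strongly resolves a connected graph as soon as it meets every pair of
  mutually maximally distant vertices, and such a pair is strongly resolved only by its own
  two vertices. In the even chain cycle the vertex \<open>(1, 1)\<close> together with the lower halves
  of all cycles forms a geodesic, on which every mutually maximally distant pair contains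
  \<open>(1, 1)\<close>; so \<open>(1, 1)\<close> and the \<open>(n i - 2) div 2\<close> inner vertices of the upper half of each
  cycle form a strong resolving set. Conversely, these vertices have pairwise distinct
  mutually maximally distant partners outside the set (the antipode on the cycle, and for
  \<open>(1, 1)\<close> the far end of the geodesic), so no smaller set works.\<close>

section \<open>Walks and graph distance\<close>

lemma walk_singleton [simp]: "walk E [x]"
  by (simp add: walk_def)

lemma walk_Cons_Cons: "walk E (x # y # xs) \<longleftrightarrow> E x y \<and> walk E (y # xs)"
  unfolding walk_def by (auto simp: nth_Cons split: nat.splits)

lemma walk_take: "walk E xs \<Longrightarrow> k < length xs \<Longrightarrow> walk E (take (Suc k) xs)"
  unfolding walk_def by auto

lemma walk_drop: "walk E xs \<Longrightarrow> k < length xs \<Longrightarrow> walk E (drop k xs)"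
  unfolding walk_def by (auto simp: add.commute)

lemma walk_append_tl:
  assumes "walk E p" "walk E q" "last p = hd q"
  shows "walk E (p @ tl q)" "hd (p @ tl q) = hd p" "last (p @ tl q) = last q"
    "set (p @ tl q) \<subseteq> set p \<union> set q" "length (p @ tl q) = length p + length q - 1"
proof -
  show "walk E (p @ tl q)"
    using assms
  proof (induction p rule: induct_list012)
    case 1 then show ?case by (simp add: walk_def)
  next
    case (2 x) then show ?case by (cases q; cases "tl q") (auto simp: walk_Cons_Cons)
  next
    case (3 x y zs) then show ?case by (auto simp: walk_Cons_Cons)
  qed
  show "hd (p @ tl q) = hd p" "length (p @ tl q) = length p + length q - 1"
    using assms by (cases q; auto simp: walk_def)+
  show "last (p @ tl q) = last q"
    using assms by (cases q; cases "tl q") (auto simp: walk_def)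
  show "set (p @ tl q) \<subseteq> set p \<union> set q"
    by (cases q) auto
qed

lemma walk_rev: "(\<And>a b. E a b \<Longrightarrow> E b a) \<Longrightarrow> walk E xs \<Longrightarrow> walk E (rev xs)"
proof (induction xs rule: induct_list012)
  case 1 then show ?case by (simp add: walk_def)
next
  case (2 x) then show ?case by simp
next
  case (3 x y zs)
  have "walk E (rev (y # zs))" "walk E [y, x]"
    using 3 by (auto simp: walk_Cons_Cons)
  then have "walk E (rev (y # zs) @ tl [y, x])"
    by (intro walk_append_tl) auto
  then show ?case by simp
qed

lemma walk_lipschitz:
  fixes f :: "'a \<Rightarrow> int"
  assumes "\<And>a b. E a b \<Longrightarrow> \<bar>f a - f b\<bar> \<le> 1" "walk E xs"
  shows "\<bar>f (hd xs) - f (last xs)\<bar> \<le> int (length xs) - 1"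
  using assms(2)
proof (induction xs rule: induct_list012)
  case 1 then show ?case by (simp add: walk_def)
next
  case (2 x) then show ?case by simp
next
  case (3 x y zs)
  then have "E x y" "walk E (y # zs)" by (auto simp: walk_Cons_Cons)
  with 3 assms(1)[of x y] show ?case by auto
qed

locale connected_graph =
  fixes V :: "'a set" and E :: "'a \<Rightarrow> 'a \<Rightarrow> bool"
  assumes finite_V: "finite V"
    and sym_E: "E a b \<Longrightarrow> E b a"
    and connected: "u \<in> V \<Longrightarrow> v \<in> V \<Longrightarrow> \<exists>xs. walk E xs \<and> set xs \<subseteq> V \<and> hd xs = u \<and> last xs = v"
begin

abbreviation "d \<equiv> gdist V E"

lemma gdist_le:
  assumes "walk E xs" "set xs \<subseteq> V" "hd xs = u" "last xs = v" "length xs = Suc k"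
  shows "d u v \<le> k"
  unfolding gdist_def by (rule Least_le) (use assms in blast)

lemma shortest_path_exists:
  assumes "u \<in> V" "v \<in> V"
  obtains p where "shortest_path V E u v p"
proof -
  obtain xs where xs: "walk E xs" "set xs \<subseteq> V" "hd xs = u" "last xs = v"
    using connected assms by blast
  then have "\<exists>k xs. walk E xs \<and> set xs \<subseteq> V \<and> hd xs = u \<and> last xs = v \<and> length xs = Suc k"
    by (intro exI[of _ "length xs - 1"] exI[of _ xs]) (auto simp: walk_def)
  from LeastI_ex[OF this] show ?thesis
    using that unfolding shortest_path_def gdist_def by blast
qed

lemma gdist_triangle_path:
  assumes "u \<in> V" "v \<in> V" "w \<in> V"
  obtains p where "walk E p" "set p \<subseteq> V" "hd p = u" "last p = w" "v \<in> set p"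
    "length p = Suc (d u v + d v w)"
proof -
  obtain p q where p: "shortest_path V E u v p" and q: "shortest_path V E v w q"
    using shortest_path_exists assms by metis
  then have pq: "walk E p" "walk E q" "last p = hd q"
    by (auto simp: shortest_path_def)
  show ?thesis
  proof (rule that[of "p @ tl q"])
    show "v \<in> set (p @ tl q)"
      using p by (auto simp: shortest_path_def walk_def)
  qed (use walk_append_tl[OF pq] p q in \<open>auto simp: shortest_path_def\<close>)
qed

lemma gdist_triangle: "u \<in> V \<Longrightarrow> v \<in> V \<Longrightarrow> w \<in> V \<Longrightarrow> d u w \<le> d u v + d v w"
  by (metis gdist_le gdist_triangle_path)

lemma shortest_path_via:
  assumes "u \<in> V" "v \<in> V" "w \<in> V" "d u v + d v w = d u w"
  shows "\<exists>p. shortest_path V E u w p \<and> v \<in> set p"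
  using gdist_triangle_path[OF assms(1-3)] assms(4) unfolding shortest_path_def by metis

lemma gdist_sym:
  assumes "u \<in> V" "v \<in> V"
  shows "d u v = d v u"
proof -
  have "d b a \<le> d a b" if ab: "a \<in> V" "b \<in> V" for a b
  proof -
    obtain p where p: "shortest_path V E a b p"
      using shortest_path_exists[OF ab] .
    have "walk E (rev p)"
      using p walk_rev[of E p] sym_E by (simp add: shortest_path_def)
    moreover have "p \<noteq> []"
      using p by (simp add: shortest_path_def walk_def)
    ultimately show ?thesis
      using p by (intro gdist_le[of "rev p"]) (auto simp: shortest_path_def hd_rev last_rev)
  qed
  then show ?thesis using assms by (meson le_antisym)
qed

lemma gdist_self [simp]: "u \<in> V \<Longrightarrow> d u u = 0"
  using gdist_le[of "[u]" u u 0] by simp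

lemma gdist_eq_0_imp_eq:
  assumes "u \<in> V" "v \<in> V" "d u v = 0"
  shows "u = v"
proof -
  obtain p where "shortest_path V E u v p"
    using shortest_path_exists assms by blast
  then show ?thesis
    using assms by (cases p) (auto simp: shortest_path_def)
qed

lemma gdist_edge:
  assumes "E u v" "u \<in> V" "v \<in> V" "w \<in> V"
  shows "d w v \<le> d w u + 1"
  using gdist_triangle[of w u v] gdist_le[of "[u, v]" u v 1] assms by (simp add: walk_Cons_Cons)

lemma gdist_lipschitz:
  fixes f :: "'a \<Rightarrow> int"
  assumes "\<And>a b. E a b \<Longrightarrow> \<bar>f a - f b\<bar> \<le> 1" "u \<in> V" "v \<in> V"
  shows "\<bar>f u - f v\<bar> \<le> int (d u v)"
proof -
  obtain p where "shortest_path V E u v p"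
    using shortest_path_exists assms by blast
  then show ?thesis
    using walk_lipschitz[OF assms(1), where xs=p] by (auto simp: shortest_path_def)
qed

lemma shortest_path_step_away:
  assumes "shortest_path V E v w p" "u \<in> set p" "u \<noteq> w"
  shows "\<exists>z\<in>V. E u z \<and> d v u < d v z"
proof -
  from assms(1) have p: "walk E p" "set p \<subseteq> V" "hd p = v" "last p = w" "length p = Suc (d v w)"
    by (auto simp: shortest_path_def)
  obtain k where k: "k < length p" "p ! k = u"
    using assms(2) by (auto simp: in_set_conv_nth)
  have "Suc k < length p"
  proof (rule ccontr)
    assume "\<not> Suc k < length p"
    then have "k = length p - 1" using k by simp
    then have "u = last p" using k p by (simp add: last_conv_nth walk_def)
    then show False using assms p by simp
  qed
  define z where "z = p ! Suc k"
  have Euz: "E u z" and zV: "z \<in> V"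
    using p \<open>Suc k < length p\<close> k unfolding walk_def z_def by auto
  have "d v u \<le> k"
    by (rule gdist_le[of "take (Suc k) p"])
      (use p k in \<open>auto simp: walk_take last_conv_nth hd_conv_nth walk_def dest: in_set_takeD\<close>)
  moreover have "d z w \<le> length p - Suc (Suc k)"
    by (rule gdist_le[of "drop (Suc k) p"])
      (use p \<open>Suc k < length p\<close> in \<open>auto simp: walk_drop hd_drop_conv_nth z_def walk_def dest: in_set_dropD\<close>)
  moreover have "v \<in> V" "w \<in> V"
    using p by (auto simp: walk_def)
  then have "d v w \<le> d v z + d z w"
    using gdist_triangle zV by blast
  ultimately have "d v u < d v z"
    using p \<open>Suc k < length p\<close> by linarith
  then show ?thesis using Euz zV by blast
qed

section \<open>Mutually maximally distant vertices\<close>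

definition mutually_maximally_distant :: "'a \<Rightarrow> 'a \<Rightarrow> bool" where
  "mutually_maximally_distant x y \<longleftrightarrow>
     (\<forall>z\<in>V. E x z \<longrightarrow> d y z \<le> d y x) \<and> (\<forall>z\<in>V. E y z \<longrightarrow> d x z \<le> d x y)"

lemma mutually_maximally_distant_sym:
  "mutually_maximally_distant x y \<Longrightarrow> mutually_maximally_distant y x"
  unfolding mutually_maximally_distant_def by blast

lemma strongly_resolves_mutually_maximally_distant:
  assumes "mutually_maximally_distant x y" "strongly_resolves V E w x y"
  shows "w = x \<or> w = y"
proof (rule ccontr)
  assume ends: "\<not> (w = x \<or> w = y)"
  from assms(2) consider p where "shortest_path V E y w p" "x \<in> set p"
    | p where "shortest_path V E x w p" "y \<in> set p"
    unfolding strongly_resolves_def by blast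
  then show False
  proof cases
    case 1
    then obtain z where "z \<in> V" "E x z" "d y x < d y z"
      using shortest_path_step_away ends by blast
    with assms(1) show False
      unfolding mutually_maximally_distant_def by force
  next
    case 2
    then obtain z where "z \<in> V" "E y z" "d x y < d x z"
      using shortest_path_step_away ends by blast
    with assms(1) show False
      unfolding mutually_maximally_distant_def by force
  qed
qed

lemma geodesic_extension_locally_farthest:
  assumes "u \<in> V" "v \<in> V"
  obtains x where "x \<in> V" "d v u + d u x = d v x" "\<forall>z\<in>V. E x z \<longrightarrow> d v z \<le> d v x"
proof -
  define S where "S = {x\<in>V. d v u + d u x = d v x}"
  have "finite S" "u \<in> S"
    using finite_V assms by (auto simp: S_def)
  then have "Max (d v ` S) \<in> d v ` S"
    by (intro Max_in) auto
  then obtain x where x: "x \<in> S" "d v x = Max (d v ` S)"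
    by auto
  have "d v z \<le> d v x" if "z \<in> V" "E x z" for z
  proof (rule ccontr)
    assume far: "\<not> d v z \<le> d v x"
    have "x \<in> V" using x by (simp add: S_def)
    then have "d v z \<le> d v x + 1" "d u z \<le> d u x + 1" "d v z \<le> d v u + d u z"
      using gdist_edge that assms gdist_triangle by auto
    then have "z \<in> S"
      using far x(1) that by (auto simp: S_def)
    then show False
      using far x Max_ge[of "d v ` S" "d v z"] \<open>finite S\<close> by simp
  qed
  then show ?thesis
    using that x by (auto simp: S_def)
qed

text \<open>Extending a geodesic from \<open>v\<close> through \<open>u\<close> as far as possible, and then
  the geodesic from its endpoint \<open>x\<close> through \<open>v\<close>, ends in a mutually maximally distant
  pair \<open>x, y\<close> whose geodesics pass through \<open>u\<close> and \<open>v\<close>.\<close>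

lemma mutually_maximally_distant_beyond:
  assumes "u \<in> V" "v \<in> V" "u \<noteq> v"
  obtains x y where "x \<in> V" "y \<in> V" "x \<noteq> y" "mutually_maximally_distant x y"
    "d v u + d u x = d v x" "d u v + d v y = d u y"
proof -
  obtain x where x: "x \<in> V" "d v u + d u x = d v x" "\<forall>z\<in>V. E x z \<longrightarrow> d v z \<le> d v x"
    using geodesic_extension_locally_farthest assms by metis
  obtain y where y: "y \<in> V" "d x v + d v y = d x y" "\<forall>z\<in>V. E y z \<longrightarrow> d x z \<le> d x y"
    using geodesic_extension_locally_farthest[OF assms(2) x(1)] by metis
  have sym: "d y v = d v y" "d y x = d x y" "d v x = d x v" "d u v = d v u" "d u x = d x u"
    using x(1) y(1) assms gdist_sym by auto
  have "d y z \<le> d y x" if "z \<in> V" "E x z" for z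
  proof -
    have "d y z \<le> d y v + d v z"
      using gdist_triangle that y(1) assms by blast
    then show ?thesis
      using x(3) y(2) that sym by fastforce
  qed
  then have "mutually_maximally_distant x y"
    using y(3) by (simp add: mutually_maximally_distant_def)
  moreover have "x \<noteq> y"
  proof
    assume "x = y"
    then have "d v u + d u v = 0"
      using x(2) y(2) sym gdist_self[OF y(1)] by auto
    then show False
      using gdist_eq_0_imp_eq assms by simp
  qed
  moreover have "d u v + d v y = d u y"
  proof -
    have "d u y \<le> d u v + d v y" "d x y \<le> d x u + d u y"
      using gdist_triangle x(1) y(1) assms by blast+
    then show ?thesis
      using x(2) y(2) sym by linarith
  qed
  ultimately show ?thesis
    using that x y by blast
qed

lemma strong_resolving_set_if_covers_mutually_maximally_distant:
  assumes "W \<subseteq> V"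
    and cover: "\<And>x y. x \<in> V \<Longrightarrow> y \<in> V \<Longrightarrow> x \<noteq> y \<Longrightarrow> mutually_maximally_distant x y \<Longrightarrow> x \<in> W \<or> y \<in> W"
  shows "strong_resolving_set V E W"
  unfolding strong_resolving_set_def
proof (intro conjI assms ballI impI)
  fix u v assume uv: "u \<in> V" "v \<in> V" "u \<noteq> v"
  obtain x y where xy: "x \<in> V" "y \<in> V" "x \<noteq> y" "mutually_maximally_distant x y"
    "d v u + d u x = d v x" "d u v + d v y = d u y"
    using mutually_maximally_distant_beyond[OF uv] .
  then consider "x \<in> W" | "y \<in> W"
    using cover by blast
  then show "\<exists>w\<in>W. strongly_resolves V E w u v"
  proof cases
    case 1
    then show ?thesis
      using shortest_path_via[of v u x] xy uv unfolding strongly_resolves_def by blast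
  next
    case 2
    then show ?thesis
      using shortest_path_via[of u v y] xy uv unfolding strongly_resolves_def by blast
  qed
qed

end

section \<open>The even chain cycle\<close>

lemma cyclic_distance_step:
  fixes x M :: int
  assumes "0 < M"
  shows "\<bar>min ((x + 1) mod M) (M - (x + 1) mod M) - min (x mod M) (M - x mod M)\<bar> \<le> 1"
proof -
  have "(x + 1) mod M = (x mod M + 1) mod M"
    by (simp add: mod_add_left_eq)
  moreover have "0 \<le> x mod M" "x mod M < M"
    using assms by auto
  ultimately have "(x + 1) mod M = (if x mod M = M - 1 then 0 else x mod M + 1)"
    by (cases "x mod M = M - 1") (auto simp: mod_pos_pos_trivial)
  then show ?thesis
    by (auto simp: min_def)
qed

locale even_chain_cycle =
  fixes m :: nat and n :: "nat \<Rightarrow> nat"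
  assumes two_le_m: "2 \<le> m"
    and even_cycles: "\<And>i. 1 \<le> i \<Longrightarrow> i \<le> m \<Longrightarrow> even (n i) \<and> 4 \<le> n i"
begin

abbreviation "N i \<equiv> n i div 2"
abbreviation "rep \<equiv> chain_rep n"
abbreviation "V \<equiv> chain_V m n"
abbreviation "E \<equiv> chain_E m n"

definition labels :: "(nat \<times> nat) set" where
  "labels = {(i, j). 1 \<le> i \<and> i \<le> m \<and> 1 \<le> j \<and> j \<le> n i}"

lemma n_eq_2N: "1 \<le> i \<Longrightarrow> i \<le> m \<Longrightarrow> n i = 2 * N i \<and> 2 \<le> N i"
  using even_cycles[of i] by auto

lemma V_eq: "V = rep ` labels"
  by (simp add: chain_V_def labels_def)

lemma rep_pair: "rep (k, l) = (if 2 \<le> k \<and> l = 1 then (k - 1, N (k - 1) + 1) else (k, l))"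
  by (simp add: chain_rep_def)

lemma rep_self: "\<not> (2 \<le> k \<and> l = 1) \<Longrightarrow> rep (k, l) = (k, l)"
  unfolding chain_rep_def by auto

lemma mem_labels [simp]: "(k, l) \<in> labels \<longleftrightarrow> 1 \<le> k \<and> k \<le> m \<and> 1 \<le> l \<and> l \<le> n k"
  by (simp add: labels_def)

lemma rep_in_V: "(k, l) \<in> labels \<Longrightarrow> rep (k, l) \<in> V"
  by (simp add: V_eq)

lemma pair_in_V: "(k, l) \<in> labels \<Longrightarrow> \<not> (2 \<le> k \<and> l = 1) \<Longrightarrow> (k, l) \<in> V"
  by (metis rep_in_V rep_self)

lemma succ_in_labels: "(k, l) \<in> labels \<Longrightarrow> (k, l mod n k + 1) \<in> labels"
  using n_eq_2N[of k] by (auto simp: Suc_le_eq)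

lemma E_iff: "E a b \<longleftrightarrow> (\<exists>k l. (k, l) \<in> labels \<and> {a, b} = {rep (k, l), rep (k, l mod n k + 1)})"
  unfolding chain_E_def by auto

lemma E_succ: "(k, l) \<in> labels \<Longrightarrow> E (rep (k, l)) (rep (k, l mod n k + 1))"
  unfolding E_iff by blast

lemma sym_E: "E a b \<Longrightarrow> E b a"
  unfolding E_iff by (auto simp: insert_commute)

lemma finite_V: "finite V"
proof -
  have "labels \<subseteq> {1..m} \<times> {1..Max (n ` {1..m})}"
    by (auto simp: labels_def)
      (meson Max_ge atLeastAtMost_iff finite_atLeastAtMost finite_imageI image_eqI le_trans)
  then have "finite labels"
    by (rule finite_subset) auto
  then show ?thesis
    by (simp add: V_eq)
qed

text \<open>Positions on the \<open>i\<close>-th cycle are counted from \<open>0\<close>: position \<open>q\<close> is the vertex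
  labelled \<open>(i, q mod n i + 1)\<close>.\<close>

definition arc :: "nat \<Rightarrow> nat \<Rightarrow> nat \<Rightarrow> (nat \<times> nat) list" where
  "arc i q len = map (\<lambda>t. rep (i, (q + t) mod n i + 1)) [0..<Suc len]"

lemma arc_walk:
  assumes "1 \<le> i" "i \<le> m"
  shows "walk E (arc i q len)" "set (arc i q len) \<subseteq> V" "hd (arc i q len) = rep (i, q mod n i + 1)"
    "last (arc i q len) = rep (i, (q + len) mod n i + 1)" "length (arc i q len) = Suc len"
proof -
  have "E (rep (i, x mod n i + 1)) (rep (i, Suc x mod n i + 1))" for x
    using E_succ[of i "x mod n i + 1"] assms n_eq_2N[of i] by (simp add: Suc_le_eq mod_Suc_eq)
  then show "walk E (arc i q len)"
    unfolding arc_def walk_def by (auto simp del: upt_Suc simp: add.commute add.left_commute)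
  show "set (arc i q len) \<subseteq> V"
    unfolding arc_def using assms n_eq_2N[of i] by (auto intro!: rep_in_V simp: Suc_le_eq)
  show "hd (arc i q len) = rep (i, q mod n i + 1)"
    unfolding arc_def by (simp del: upt_Suc add: hd_map upt_conv_Cons)
  show "last (arc i q len) = rep (i, (q + len) mod n i + 1)" "length (arc i q len) = Suc len"
    unfolding arc_def by (simp_all add: last_map)
qed

definition reachable :: "nat \<times> nat \<Rightarrow> nat \<times> nat \<Rightarrow> bool" where
  "reachable u v \<longleftrightarrow> (\<exists>xs. walk E xs \<and> set xs \<subseteq> V \<and> hd xs = u \<and> last xs = v)"

lemma reachable_trans:
  assumes "reachable u v" "reachable v w"
  shows "reachable u w"
proof -
  obtain p q where p: "walk E p" "set p \<subseteq> V" "hd p = u" "last p = v"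
    and q: "walk E q" "set q \<subseteq> V" "hd q = v" "last q = w"
    using assms unfolding reachable_def by blast
  then have "last p = hd q" by simp
  then show ?thesis
    unfolding reachable_def using walk_append_tl[OF p(1) q(1)] p q by blast
qed

lemma reachable_sym:
  assumes "reachable u v"
  shows "reachable v u"
proof -
  obtain p where p: "walk E p" "set p \<subseteq> V" "hd p = u" "last p = v"
    using assms unfolding reachable_def by blast
  then have "walk E (rev p)" "p \<noteq> []"
    using walk_rev[of E p] sym_E by (auto simp: walk_def)
  then show ?thesis
    unfolding reachable_def using p by (intro exI[of _ "rev p"]) (auto simp: hd_rev last_rev)
qed

lemma reachable_along_arc:
  assumes "1 \<le> i" "i \<le> m"
  shows "reachable (rep (i, q mod n i + 1)) (rep (i, (q + len) mod n i + 1))"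
  unfolding reachable_def using arc_walk[OF assms] by blast

lemma reachable_from_start: "(k, l) \<in> labels \<Longrightarrow> reachable (1, 1) (rep (k, l))"
proof (induction k arbitrary: l)
  case 0
  then show ?case by simp
next
  case (Suc k)
  have "reachable (rep (Suc k, 0 mod n (Suc k) + 1)) (rep (Suc k, (0 + (l - 1)) mod n (Suc k) + 1))"
    using Suc.prems by (intro reachable_along_arc) auto
  moreover have "(0 + (l - 1)) mod n (Suc k) + 1 = l"
    using Suc.prems by auto
  moreover have "reachable (1, 1) (rep (Suc k, 1))"
  proof (cases "k = 0")
    case True
    have "(1, 1) \<in> V"
      using Suc.prems True by (intro pair_in_V) auto
    then show ?thesis
      unfolding reachable_def using True by (intro exI[of _ "[(1, 1)]"]) (simp add: rep_pair)
  next
    case False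
    then have "(k, N k + 1) \<in> labels"
      using Suc.prems n_eq_2N[of k] by auto
    then have "reachable (1, 1) (rep (k, N k + 1))"
      by (rule Suc.IH)
    moreover have "rep (k, N k + 1) = rep (Suc k, 1)"
      using False Suc.prems n_eq_2N[of k] by (simp add: rep_pair)
    ultimately show ?thesis
      by simp
  qed
  ultimately show ?case
    using reachable_trans by simp
qed

lemma connected:
  assumes "u \<in> V" "v \<in> V"
  shows "\<exists>xs. walk E xs \<and> set xs \<subseteq> V \<and> hd xs = u \<and> last xs = v"
proof -
  obtain a b where "a \<in> labels" "b \<in> labels" "u = rep a" "v = rep b"
    using assms unfolding V_eq by blast
  then have "reachable (1, 1) u" "reachable (1, 1) v"
    using reachable_from_start by (metis surj_pair)+
  then have "reachable u v"
    using reachable_sym reachable_trans by blast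
  then show ?thesis
    unfolding reachable_def .
qed

sublocale connected_graph V E
  using finite_V sym_E connected by unfold_locales

lemma gdist_arc_le:
  assumes "1 \<le> i" "i \<le> m"
  shows "d (rep (i, q mod n i + 1)) (rep (i, (q + len) mod n i + 1)) \<le> len"
  by (rule gdist_le[of "arc i q len"]) (use arc_walk[OF assms] in auto)

text \<open>Two integer potentials that change by at most one along an edge, hence bound the
  distance from below: \<open>level\<close> follows the lower half-arcs, on which the cycles
  \<open>1, \<dots>, k - 1\<close> contribute \<open>offset k\<close>, and \<open>cyc_dist i q\<close> is the distance within the
  \<open>i\<close>-th cycle from its position \<open>q\<close>, all other cycles being collapsed to their attachment
  vertices.\<close>

definition offset :: "nat \<Rightarrow> nat" where
  "offset k = (\<Sum>t = 1..<k. N t)"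

definition level :: "nat \<times> nat \<Rightarrow> nat" where
  "level v = offset (fst v) + min (snd v - 1) (n (fst v) - snd v + 1)"

lemma offset_Suc: "1 \<le> k \<Longrightarrow> offset (Suc k) = offset k + N k"
  by (simp add: offset_def)

lemma offset_1 [simp]: "offset (Suc 0) = 0"
  by (simp add: offset_def)

lemma offset_mono:
  assumes "1 \<le> k" "k < k'"
  shows "offset (Suc k) \<le> offset k'"
  unfolding offset_def by (rule sum_mono2) (use assms in auto)

lemma level_rep:
  assumes "(k, l) \<in> labels"
  shows "level (rep (k, l)) = offset k + min (l - 1) (n k - l + 1)"
proof (cases "2 \<le> k \<and> l = 1")
  case True
  then have "rep (k, l) = (k - 1, N (k - 1) + 1)"
    by (simp add: rep_pair)
  moreover have "n (k - 1) = 2 * N (k - 1)"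
    using n_eq_2N[of "k - 1"] True assms by auto
  moreover have "offset k = offset (k - 1) + N (k - 1)"
    using offset_Suc[of "k - 1"] True by (cases k) auto
  ultimately show ?thesis
    using True by (simp add: level_def min_def; arith)
next
  case False
  then show ?thesis
    by (simp add: rep_self level_def)
qed

lemma level_lipschitz: "E a b \<Longrightarrow> \<bar>int (level a) - int (level b)\<bar> \<le> 1"
proof -
  assume "E a b"
  then obtain k l where kl: "(k, l) \<in> labels" "{a, b} = {rep (k, l), rep (k, l mod n k + 1)}"
    unfolding E_iff by blast
  have "4 \<le> n k"
    using even_cycles[of k] kl by auto
  have "\<bar>int (level (rep (k, l))) - int (level (rep (k, l mod n k + 1)))\<bar> \<le> 1"
  proof (cases "l < n k")
    case True
    then show ?thesis
      using kl level_rep succ_in_labels by (auto simp: min_def)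
  next
    case False
    then have "l = n k"
      using kl by auto
    then show ?thesis
      using kl level_rep succ_in_labels \<open>4 \<le> n k\<close> by (auto simp: min_def)
  qed
  then show ?thesis
    using kl(2) by (auto simp: doubleton_eq_iff)
qed

definition cyc_pos :: "nat \<Rightarrow> nat \<times> nat \<Rightarrow> nat" where
  "cyc_pos i v = (if fst v < i then 0 else if fst v > i then N i else snd v - 1)"

lemma cyc_pos_rep:
  assumes "(k, l) \<in> labels"
  shows "cyc_pos i (rep (k, l)) = (if k < i then 0 else if k > i then N i else l - 1)"
proof (cases "2 \<le> k \<and> l = 1")
  case True
  then show ?thesis
    by (auto simp: rep_pair cyc_pos_def)
next
  case False
  then show ?thesis
    by (auto simp: rep_self cyc_pos_def)
qed

definition cyc_dist :: "nat \<Rightarrow> nat \<Rightarrow> nat \<times> nat \<Rightarrow> int" where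
  "cyc_dist i q v = min ((int (cyc_pos i v) - int q) mod int (n i))
     (int (n i) - (int (cyc_pos i v) - int q) mod int (n i))"

lemma cyc_dist_lipschitz:
  assumes "1 \<le> i" "i \<le> m" "E a b"
  shows "\<bar>cyc_dist i q a - cyc_dist i q b\<bar> \<le> 1"
proof -
  obtain k l where kl: "(k, l) \<in> labels" "{a, b} = {rep (k, l), rep (k, l mod n k + 1)}"
    using assms(3) unfolding E_iff by blast
  have "\<bar>cyc_dist i q (rep (k, l)) - cyc_dist i q (rep (k, l mod n k + 1))\<bar> \<le> 1"
  proof (cases "k = i")
    case False
    then show ?thesis
      using cyc_pos_rep[OF kl(1)] cyc_pos_rep[OF succ_in_labels[OF kl(1)]] by (simp add: cyc_dist_def)
  next
    case True
    define x where "x = int (l - 1) - int q"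
    have pos: "cyc_pos i (rep (k, l)) = l - 1" "cyc_pos i (rep (k, l mod n k + 1)) = l mod n k"
      using cyc_pos_rep[OF kl(1)] cyc_pos_rep[OF succ_in_labels[OF kl(1)]] True by simp_all
    have "int (l mod n k) = (int (l - 1) + 1) mod int (n k)"
      using kl by (auto simp: zmod_int of_nat_diff)
    then have "(int (l mod n k) - int q) mod int (n i) = (x + 1) mod int (n i)"
      using True by (simp add: x_def mod_diff_left_eq algebra_simps)
    moreover have "0 < int (n i)"
      using even_cycles[of i] assms by auto
    ultimately show ?thesis
      using cyclic_distance_step[of "int (n i)" x] pos
      unfolding cyc_dist_def x_def by (simp add: abs_minus_commute)
  qed
  then show ?thesis
    using kl(2) by (auto simp: doubleton_eq_iff abs_minus_commute)
qed


text \<open>The spine, i.e.\ \<open>(1, 1)\<close> together with the lower half of every cycle, is a geodesic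
  on which \<open>level\<close> is the distance from \<open>(1, 1)\<close>; every other vertex lies in the basis.\<close>

definition spine :: "(nat \<times> nat) set" where
  "spine = {(1, 1)} \<union> {(k, l). 1 \<le> k \<and> k \<le> m \<and> N k + 1 \<le> l \<and> l \<le> n k}"

definition basis :: "(nat \<times> nat) set" where
  "basis = {(1, 1)} \<union> {(k, l). 1 \<le> k \<and> k \<le> m \<and> 2 \<le> l \<and> l \<le> N k}"

lemma start_in_V: "(1, 1) \<in> V"
  using two_le_m n_eq_2N[of 1] by (intro pair_in_V) auto

lemma basis_subset_V: "basis \<subseteq> V"
proof
  fix x assume "x \<in> basis"
  then consider "x = (1, 1)" | k l where "x = (k, l)" "1 \<le> k" "k \<le> m" "2 \<le> l" "l \<le> N k"
    unfolding basis_def by auto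
  then show "x \<in> V"
  proof cases
    case 1
    then show ?thesis using start_in_V by simp
  next
    case (2 k l)
    then show ?thesis using n_eq_2N[of k] by (auto intro!: pair_in_V)
  qed
qed

lemma spine_cases:
  assumes "x \<in> spine"
  obtains "x = (1, 1)"
    | k l where "x = (k, l)" "1 \<le> k" "k \<le> m" "N k + 1 \<le> l" "l \<le> n k"
  using assms n_eq_2N unfolding spine_def by fastforce

lemma spine_subset_V: "spine \<subseteq> V"
proof
  fix x assume "x \<in> spine"
  then show "x \<in> V"
  proof (cases rule: spine_cases)
    case 1
    then show ?thesis using start_in_V by simp
  next
    case (2 k l)
    then show ?thesis using n_eq_2N[of k] by (auto intro!: pair_in_V)
  qed
qed

lemma V_subset_basis_spine: "V \<subseteq> basis \<union> spine"
proof
  fix v assume "v \<in> V"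
  then obtain k l where kl: "(k, l) \<in> labels" "v = rep (k, l)"
    unfolding V_eq by auto
  show "v \<in> basis \<union> spine"
  proof (cases "2 \<le> k \<and> l = 1")
    case True
    then have "1 \<le> k - 1" "k - 1 \<le> m"
      using kl by auto
    then show ?thesis
      using kl True n_eq_2N[of "k - 1"] by (auto simp: rep_pair spine_def)
  next
    case False
    then show ?thesis
      using kl n_eq_2N[of k] by (auto simp: rep_self spine_def basis_def)
  qed
qed

lemma level_start [simp]: "level (Suc 0, Suc 0) = 0"
  by (simp add: level_def offset_def)

lemma level_spine:
  assumes "1 \<le> k" "k \<le> m" "N k + 1 \<le> l" "l \<le> n k"
  shows "level (k, l) = offset k + (n k - l + 1)"
  using assms n_eq_2N[OF assms(1,2)] by (auto simp: level_def min_def)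

lemma level_top:
  assumes "1 \<le> k" "k \<le> m"
  shows "level (k, N k + 1) = offset (Suc k)"
proof -
  have "level (k, N k + 1) = offset k + (n k - (N k + 1) + 1)"
    by (rule level_spine) (use assms n_eq_2N[OF assms] in auto)
  also have "n k - (N k + 1) + 1 = N k"
    using n_eq_2N[OF assms] by linarith
  finally show ?thesis
    using offset_Suc assms by simp
qed

lemma level_spine_bounds:
  assumes "x \<in> spine" "x \<noteq> (1, 1)"
  shows "offset (fst x) < level x" "level x \<le> offset (Suc (fst x))"
proof -
  obtain k l where kl: "x = (k, l)" "1 \<le> k" "k \<le> m" "N k + 1 \<le> l" "l \<le> n k"
    by (cases rule: spine_cases[OF assms(1)]) (use assms(2) in auto)
  then have "n k - l + 1 \<le> N k"
    using n_eq_2N[of k] by linarith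
  then show "offset (fst x) < level x" "level x \<le> offset (Suc (fst x))"
    using kl level_spine[of k l] offset_Suc[of k] by simp_all
qed

lemma inj_on_level_spine: "inj_on level spine"
proof (rule inj_onI)
  fix x y assume xy: "x \<in> spine" "y \<in> spine" "level x = level y"
  have below: "level a < level b" if "a \<in> spine" "b \<in> spine" "fst a < fst b" for a b
  proof -
    have "1 \<le> fst a"
      using that(1) by (cases rule: spine_cases) auto
    then have "b \<noteq> (1, 1)" "offset (Suc (fst a)) \<le> offset (fst b)"
      using that(3) offset_mono by auto
    moreover have "level a \<le> offset (Suc (fst a))"
      using level_spine_bounds(2)[OF that(1)] by (cases "a = (1, 1)") auto
    ultimately show ?thesis
      using level_spine_bounds(1)[OF that(2)] by linarith
  qed
  have fst_eq: "fst x = fst y"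
  proof (rule ccontr)
    assume "fst x \<noteq> fst y"
    then have "level x < level y \<or> level y < level x"
      using below xy(1,2) by (meson linorder_neqE_nat)
    then show False
      using xy(3) by simp
  qed
  have start: "z = (1, 1)" if "z \<in> spine" "level z = 0" for z
    using level_spine_bounds(1)[OF that(1)] that(2) by (cases "z = (1, 1)") auto
  show "x = y"
  proof (cases "x = (1, 1) \<or> y = (1, 1)")
    case True
    then show ?thesis
      using start[OF xy(1)] start[OF xy(2)] xy(3) by auto
  next
    case False
    obtain k l where x: "x = (k, l)" "1 \<le> k" "k \<le> m" "N k + 1 \<le> l" "l \<le> n k"
      by (cases rule: spine_cases[OF xy(1)]) (use False in auto)
    obtain k' l' where y: "y = (k', l')" "1 \<le> k'" "k' \<le> m" "N k' + 1 \<le> l'" "l' \<le> n k'"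
      by (cases rule: spine_cases[OF xy(2)]) (use False in auto)
    have "k' = k"
      using fst_eq x y by simp
    then have "l = l'"
      using level_spine[OF x(2-5)] level_spine[OF y(2-5)] xy(3) x y by simp
    then show ?thesis
      using x y \<open>k' = k\<close> by simp
  qed
qed

lemma spine_step_down:
  assumes "x \<in> spine" "x \<noteq> (1, 1)"
  shows "\<exists>z\<in>spine. E x z \<and> level z + 1 = level x"
proof -
  obtain k l where x: "x = (k, l)" "1 \<le> k" "k \<le> m" "N k + 1 \<le> l" "l \<le> n k"
    using assms unfolding spine_def by auto
  have "rep (k, l) = (k, l)"
    using x n_eq_2N[of k] by (intro rep_self) auto
  then have Ex: "E x (rep (k, l mod n k + 1))"
    using E_succ[of k l] x by simp
  consider "l < n k" | "l = n k" "k = 1" | "l = n k" "k \<noteq> 1"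
    using x by linarith
  then show ?thesis
  proof cases
    case 1
    then have "rep (k, l mod n k + 1) = (k, l + 1)"
      using x by (simp add: rep_pair)
    then show ?thesis
      using Ex x 1 level_spine[of k l] level_spine[of k "l + 1"]
      by (intro bexI[of _ "(k, l + 1)"]) (auto simp: spine_def)
  next
    case 2
    then have "rep (k, l mod n k + 1) = (1, 1)"
      by (simp add: rep_pair)
    moreover have "level x = 1"
      using x 2 level_spine[of k l] by simp
    ultimately show ?thesis
      using Ex by (intro bexI[of _ "(1, 1)"]) (auto simp: spine_def)
  next
    case 3
    then have z: "rep (k, l mod n k + 1) = (k - 1, N (k - 1) + 1)"
      using x by (simp add: rep_pair)
    have k1: "1 \<le> k - 1" "k - 1 \<le> m"
      using 3 x by auto
    have "(k - 1, N (k - 1) + 1) \<in> spine"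
      using k1 n_eq_2N[OF k1] by (auto simp: spine_def)
    moreover have "level (k - 1, N (k - 1) + 1) + 1 = level x"
      using level_top[OF k1] level_spine[OF x(2-5)] 3 x(1) k1 by simp
    ultimately show ?thesis
      using Ex z by auto
  qed
qed

lemma gdist_spine_le:
  "x \<in> spine \<Longrightarrow> y \<in> spine \<Longrightarrow> level x \<le> level y \<Longrightarrow> d x y \<le> level y - level x"
proof (induction "level y - level x" arbitrary: y)
  case 0
  then have "x = y"
    using inj_on_level_spine by (simp add: inj_on_eq_iff)
  then show ?case
    using spine_subset_V 0 by auto
next
  case (Suc j)
  then have "y \<noteq> (1, 1)"
    by auto
  then obtain z where z: "z \<in> spine" "E y z" "level z + 1 = level y"
    using spine_step_down Suc.prems by blast
  have "d x z \<le> level z - level x"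
    using Suc z by (intro Suc.hyps) auto
  moreover have "d x y \<le> d x z + 1"
    using gdist_edge[OF sym_E[OF z(2)]] z Suc.prems spine_subset_V by blast
  ultimately show ?case
    using z Suc by linarith
qed

lemma gdist_spine:
  assumes "x \<in> spine" "y \<in> spine" "level x \<le> level y"
  shows "d x y = level y - level x"
proof -
  have "\<bar>int (level x) - int (level y)\<bar> \<le> int (d x y)"
    using gdist_lipschitz[of "\<lambda>v. int (level v)"] level_lipschitz assms spine_subset_V by blast
  then show ?thesis
    using gdist_spine_le[OF assms] assms(3) by linarith
qed

lemma not_mutually_maximally_distant_spine:
  assumes "x \<in> spine" "y \<in> spine" "x \<noteq> (1, 1)" "level x < level y"
  shows "\<not> mutually_maximally_distant x y"
proof
  assume mmd: "mutually_maximally_distant x y"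
  obtain z where z: "z \<in> spine" "E x z" "level z + 1 = level x"
    using spine_step_down assms by blast
  have "d y z = d z y" "d y x = d x y"
    using assms z spine_subset_V gdist_sym by blast+
  then have "d y x < d y z"
    using gdist_spine[of x y] gdist_spine[of z y] assms z by simp
  moreover have "d y z \<le> d y x"
    using mmd z spine_subset_V unfolding mutually_maximally_distant_def by blast
  ultimately show False
    by simp
qed

lemma basis_covers_mutually_maximally_distant:
  assumes "x \<in> V" "y \<in> V" "x \<noteq> y" "mutually_maximally_distant x y"
  shows "x \<in> basis \<or> y \<in> basis"
proof (rule ccontr)
  assume "\<not> (x \<in> basis \<or> y \<in> basis)"
  then have xy: "x \<in> spine" "y \<in> spine" "x \<noteq> (1, 1)" "y \<noteq> (1, 1)"
    using V_subset_basis_spine assms by (auto simp: basis_def)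
  then have "level x < level y \<or> level y < level x"
    using inj_on_level_spine assms(3) by (metis inj_on_eq_iff linorder_neqE_nat)
  then show False
    using not_mutually_maximally_distant_spine xy assms(4) mutually_maximally_distant_sym by metis
qed

lemma strong_resolving_set_basis: "strong_resolving_set V E basis"
  using strong_resolving_set_if_covers_mutually_maximally_distant[OF basis_subset_V]
    basis_covers_mutually_maximally_distant by blast


text \<open>The two side conditions say that \<open>(i, s)\<close> is the only label of the vertex \<open>(i, s)\<close>:
  only the top vertices \<open>(i, N i + 1)\<close> with \<open>i < m\<close> carry a second label \<open>(i + 1, 1)\<close>.\<close>

lemma rep_eq_unique_label:
  assumes "(k, l) \<in> labels" "s = 1 \<longrightarrow> i = 1" "s = N i + 1 \<longrightarrow> i = m" "rep (k, l) = (i, s)"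
  shows "k = i \<and> l = s"
proof (cases "2 \<le> k \<and> l = 1")
  case True
  then have "i = k - 1" "s = N i + 1"
    using assms(4) by (auto simp: rep_pair)
  then show ?thesis
    using assms(1,3) True by auto
next
  case False
  then show ?thesis
    using assms(4) by (simp add: rep_self)
qed

lemma neighbour_cases:
  assumes "(i, s) \<in> labels" "s = 1 \<longrightarrow> i = 1" "s = N i + 1 \<longrightarrow> i = m" "E (i, s) z"
  shows "z = rep (i, s mod n i + 1) \<or> z = rep (i, if s = 1 then n i else s - 1)"
proof -
  obtain k l where kl: "(k, l) \<in> labels" "{(i, s), z} = {rep (k, l), rep (k, l mod n k + 1)}"
    using assms(4) unfolding E_iff by blast
  from kl(2) consider "(i, s) = rep (k, l)" "z = rep (k, l mod n k + 1)"
    | "(i, s) = rep (k, l mod n k + 1)" "z = rep (k, l)"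
    by (auto simp: doubleton_eq_iff)
  then show ?thesis
  proof cases
    case 1
    then show ?thesis
      using rep_eq_unique_label[OF kl(1) assms(2,3)] by simp
  next
    case 2
    then have "k = i" "l mod n k + 1 = s"
      using rep_eq_unique_label[OF succ_in_labels[OF kl(1)] assms(2,3)] by auto
    moreover have "1 \<le> l" "l \<le> n k"
      using kl(1) by simp_all
    ultimately have "l = (if s = 1 then n i else s - 1)"
      by (cases "l < n k") auto
    then show ?thesis
      using 2 \<open>k = i\<close> by simp
  qed
qed

lemma gdist_antipode_ge:
  assumes i: "1 \<le> i" "i \<le> m" and q: "q < n i"
  shows "N i \<le> d (rep (i, (q + N i) mod n i + 1)) (rep (i, q + 1))"
proof -
  define y where "y = rep (i, (q + N i) mod n i + 1)"
  have nn: "n i = 2 * N i" "2 \<le> N i"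
    using n_eq_2N i by auto
  have xD: "(i, q + 1) \<in> labels" and yD: "(i, (q + N i) mod n i + 1) \<in> labels"
    using i q nn by (auto simp: Suc_le_eq)
  have "\<bar>cyc_dist i q y - cyc_dist i q (rep (i, q + 1))\<bar> \<le> int (d y (rep (i, q + 1)))"
    using gdist_lipschitz cyc_dist_lipschitz[OF i] rep_in_V[OF yD] rep_in_V[OF xD] y_def by blast
  moreover have "cyc_dist i q (rep (i, q + 1)) = 0"
    using cyc_pos_rep[OF xD] by (simp add: cyc_dist_def)
  moreover have "cyc_dist i q y = int (N i)"
  proof -
    have "cyc_pos i y = (q + N i) mod n i"
      using cyc_pos_rep[OF yD] y_def by simp
    moreover have "(int ((q + N i) mod n i) - int q) mod int (n i) = int (N i)"
    proof -
      have "(int ((q + N i) mod n i) - int q) mod int (n i) = (int q + int (N i) - int q) mod int (n i)"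
        by (simp add: zmod_int mod_diff_left_eq)
      also have "\<dots> = int (N i)"
        using nn by simp
      finally show ?thesis .
    qed
    ultimately show ?thesis
      unfolding cyc_dist_def using nn by simp
  qed
  ultimately show ?thesis
    by (simp add: y_def)
qed

text \<open>Away from the two attachment vertices of a cycle, both neighbours of a vertex reach
  its antipode along the cycle in \<open>N i - 1\<close> steps.\<close>

lemma antipode_locally_farthest:
  assumes i: "1 \<le> i" "i \<le> m" and q: "1 \<le> q" "q < n i" "q \<noteq> N i"
    and z: "z \<in> V" "E (i, q + 1) z"
  shows "d (rep (i, (q + N i) mod n i + 1)) z \<le> d (rep (i, (q + N i) mod n i + 1)) (i, q + 1)"
proof -
  define y where "y = rep (i, (q + N i) mod n i + 1)"
  have nn: "n i = 2 * N i" "2 \<le> N i"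
    using n_eq_2N i by auto
  have xD: "(i, q + 1) \<in> labels" and yV: "y \<in> V"
    using i q nn rep_in_V[of i "(q + N i) mod n i + 1"] by (auto simp: Suc_le_eq y_def)
  have far: "N i \<le> d y (i, q + 1)"
    using gdist_antipode_ge[OF i q(2)] q(1) by (simp add: y_def rep_self)
  have "z = rep (i, (q + 1) mod n i + 1) \<or> z = rep (i, q)"
    using neighbour_cases[OF xD _ _ z(2)] q by auto
  then have "d y z \<le> N i - 1"
  proof
    assume "z = rep (i, (q + 1) mod n i + 1)"
    then have "d z y \<le> N i - 1"
      using gdist_arc_le[OF i, of "q + 1" "N i - 1"] y_def nn by simp
    then show ?thesis
      using gdist_sym yV z(1) by simp
  next
    assume "z = rep (i, q)"
    moreover have "(q + N i + (N i - 1)) mod n i + 1 = q"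
    proof -
      have "q + N i + (N i - 1) = (q - 1) + n i"
        using nn q by simp
      then have "(q + N i + (N i - 1)) mod n i = (q - 1 + n i) mod n i"
        by (simp only:)
      also have "\<dots> = q - 1"
        using q by (subst mod_add_self2) simp
      finally show ?thesis
        using q by simp
    qed
    ultimately show ?thesis
      using gdist_arc_le[OF i, of "q + N i" "N i - 1"] y_def by simp
  qed
  then show ?thesis
    using far nn y_def by simp
qed

lemma mutually_maximally_distant_antipodes:
  assumes i: "1 \<le> i" "i \<le> m" and s: "2 \<le> s" "s \<le> N i"
  shows "mutually_maximally_distant (i, s) (i, s + N i)"
proof -
  have nn: "n i = 2 * N i" "2 \<le> N i"
    using n_eq_2N i by auto
  have "rep (i, ((s - 1) + N i) mod n i + 1) = (i, s + N i)"
    using s nn by (simp add: rep_pair)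
  moreover have "rep (i, ((s + N i - 1) + N i) mod n i + 1) = (i, s)"
  proof -
    have "(s + N i - 1) + N i = (s - 1) + n i"
      using s nn by simp
    then have "((s + N i - 1) + N i) mod n i = (s - 1 + n i) mod n i"
      by (simp only:)
    also have "\<dots> = s - 1"
      using s nn by (subst mod_add_self2) simp
    finally show ?thesis
      using s by (simp add: rep_pair)
  qed
  ultimately show ?thesis
    unfolding mutually_maximally_distant_def
    using antipode_locally_farthest[OF i, of "s - 1"] antipode_locally_farthest[OF i, of "s + N i - 1"]
      s nn by simp
qed


lemma finish_in_spine: "(m, N m + 1) \<in> spine"
  using two_le_m n_eq_2N[of m] by (auto simp: spine_def)

lemma start_in_spine: "(1, 1) \<in> spine"
  by (simp add: spine_def)

lemma gdist_start_finish: "d (1, 1) (m, N m + 1) = offset (Suc m)"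
  using gdist_spine[OF start_in_spine finish_in_spine] level_top[of m] two_le_m by simp

lemma start_neighbour_nearer_finish:
  assumes z: "z \<in> V" "E (1, 1) z"
  shows "d (m, N m + 1) z < d (m, N m + 1) (1, 1)"
proof -
  define t where "t = (m, N m + 1)"
  have one: "1 \<le> (1::nat)" "1 \<le> m"
    using two_le_m by auto
  have n1: "n 1 = 2 * N 1" "2 \<le> N 1"
    using n_eq_2N[OF one] by auto
  have tV: "t \<in> V" and dt: "d t (1, 1) = offset (Suc m)"
    using finish_in_spine spine_subset_V gdist_start_finish gdist_sym start_in_V t_def by auto
  have "z = rep (1, 1 mod n 1 + 1) \<or> z = rep (1, n 1)"
    using neighbour_cases[of 1 1 z] z one n1 by auto
  then have "z = (1, 2) \<or> z = (1, n 1)"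
    using n1 by (auto simp: rep_pair)
  then have "d t z < offset (Suc m)"
  proof
    assume z1: "z = (1, n 1)"
    then have "z \<in> spine" "level z = 1"
      using n1 one level_spine[of 1 "n 1"] by (auto simp: spine_def)
    moreover have "level z < level t"
      using level_top[OF one(2)] offset_mono[of 1 m] n1 \<open>level z = 1\<close> two_le_m t_def
      by (simp add: offset_Suc)
    ultimately have "d z t < offset (Suc m)"
      using gdist_spine[of z t] finish_in_spine level_top[OF one(2)] t_def by simp
    then show ?thesis
      using gdist_sym tV z(1) by simp
  next
    assume z2: "z = (1, 2)"
    define c where "c = (1::nat, N 1 + 1)"
    have c: "c \<in> spine" "level c = offset 2"
      using level_top[of 1] one n1 by (auto simp: c_def spine_def numeral_2_eq_2)
    have "d z c \<le> N 1 - 1"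
      using gdist_arc_le[of 1 1 "N 1 - 1"] one z2 c_def n1 by (simp add: rep_pair numeral_2_eq_2)
    moreover have "d c t = offset (Suc m) - offset 2"
      using gdist_spine[of c t] c finish_in_spine level_top[OF one(2)] offset_mono[of 1 "Suc m"] two_le_m t_def
      by (simp add: numeral_2_eq_2)
    moreover have "d t z \<le> d t c + d c z" "d t c = d c t" "d c z = d z c"
      using gdist_triangle gdist_sym tV z(1) c(1) spine_subset_V by blast+
    moreover have "offset 2 = N 1" "offset 2 \<le> offset (Suc m)"
      using offset_Suc[of 1] offset_mono[of 1 "Suc m"] two_le_m by (auto simp: numeral_2_eq_2)
    ultimately show ?thesis
      using n1 by linarith
  qed
  then show ?thesis
    using dt t_def by simp
qed

lemma finish_neighbour_nearer_start:
  assumes z: "z \<in> V" "E (m, N m + 1) z"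
  shows "d (1, 1) z < d (1, 1) (m, N m + 1)"
proof -
  have m: "1 \<le> m" "m \<le> m" "1 \<le> m - 1" "m - 1 \<le> m"
    using two_le_m by auto
  have nm: "n m = 2 * N m" "2 \<le> N m"
    using n_eq_2N[OF m(1,2)] by auto
  have "z = rep (m, (N m + 1) mod n m + 1) \<or> z = rep (m, N m)"
    using neighbour_cases[of m "N m + 1" z] z m nm by auto
  then have "z = (m, N m + 2) \<or> z = (m, N m)"
    using nm by (auto simp: rep_pair)
  then have "d (1, 1) z < offset (Suc m)"
  proof
    assume "z = (m, N m + 2)"
    then have "z \<in> spine" "level z < offset (Suc m)"
      using nm m level_spine[of m "N m + 2"] offset_Suc[of m] by (auto simp: spine_def)
    then show ?thesis
      using gdist_spine[OF start_in_spine] by simp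
  next
    assume z2: "z = (m, N m)"
    define c where "c = (m - 1, N (m - 1) + 1)"
    have c: "c \<in> spine" "level c = offset m" "c \<in> V"
      using level_top[OF m(3,4)] n_eq_2N[OF m(3,4)] m spine_subset_V by (auto simp: c_def spine_def)
    then have "d (1, 1) c = offset m"
      using gdist_spine[OF start_in_spine] by simp
    moreover have "d c z \<le> N m - 1"
      using gdist_arc_le[of m 0 "N m - 1"] m z2 c_def nm two_le_m by (simp add: rep_pair)
    moreover have "d (1, 1) z \<le> d (1, 1) c + d c z"
      using gdist_triangle start_in_V c(3) z(1) by blast
    ultimately show ?thesis
      using offset_Suc[OF m(1)] nm by linarith
  qed
  then show ?thesis
    using gdist_start_finish by simp
qed

lemma mutually_maximally_distant_start_finish:
  "mutually_maximally_distant (1, 1) (m, N m + 1)"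
  unfolding mutually_maximally_distant_def
  using start_neighbour_nearer_finish finish_neighbour_nearer_start by (auto intro: less_imp_le)

definition partner :: "nat \<times> nat \<Rightarrow> nat \<times> nat" where
  "partner a = (if a = (1, 1) then (m, N m + 1) else (fst a, snd a + N (fst a)))"

lemma basis_partner:
  assumes "a \<in> basis"
  shows "mutually_maximally_distant a (partner a)" "partner a \<in> V" "partner a \<notin> basis"
proof -
  have "mutually_maximally_distant a (partner a) \<and> partner a \<in> spine \<and> partner a \<notin> basis"
  proof (cases "a = (1, 1)")
    case True
    then show ?thesis
      using mutually_maximally_distant_start_finish finish_in_spine two_le_m n_eq_2N[of m]
      by (auto simp: partner_def basis_def)
  next
    case False
    then obtain i s where a: "a = (i, s)" "1 \<le> i" "i \<le> m" "2 \<le> s" "s \<le> N i"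
      using assms unfolding basis_def by auto
    then show ?thesis
      using mutually_maximally_distant_antipodes[OF a(2-5)] n_eq_2N[of i] False
      by (auto simp: partner_def basis_def spine_def)
  qed
  then show "mutually_maximally_distant a (partner a)" "partner a \<in> V" "partner a \<notin> basis"
    using spine_subset_V by auto
qed

lemma inj_on_partner: "inj_on partner basis"
  unfolding basis_def partner_def by (auto intro!: inj_onI split: if_splits)

lemma card_basis_le:
  assumes "strong_resolving_set V E W" "finite W"
  shows "card basis \<le> card W"
proof -
  have hit: "a \<in> W \<or> partner a \<in> W" if a: "a \<in> basis" for a
  proof -
    have "a \<in> V" "a \<noteq> partner a"
      using basis_partner[OF a] a basis_subset_V by auto
    then obtain w where "w \<in> W" "strongly_resolves V E w a (partner a)"
      using assms(1) basis_partner[OF a] unfolding strong_resolving_set_def by blast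
    then show ?thesis
      using strongly_resolves_mutually_maximally_distant basis_partner(1)[OF a] by blast
  qed
  define g where "g a = (if a \<in> W then a else partner a)" for a
  have "inj_on g basis"
  proof (rule inj_onI)
    fix a b assume ab: "a \<in> basis" "b \<in> basis" "g a = g b"
    then show "a = b"
      using basis_partner(3)[OF ab(1)] basis_partner(3)[OF ab(2)] inj_on_partner
      by (auto simp: g_def inj_on_eq_iff split: if_splits)
  qed
  moreover have "g ` basis \<subseteq> W"
  proof
    fix x assume "x \<in> g ` basis"
    then obtain a where "a \<in> basis" "x = g a"
      by blast
    then show "x \<in> W"
      using hit[of a] by (cases "a \<in> W") (simp_all add: g_def)
  qed
  ultimately show ?thesis
    using card_inj_on_le assms(2) by blast
qed

lemma card_basis: "card basis = 1 + (\<Sum>i = 1..m. (n i - 2) div 2)"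
proof -
  have "basis = insert (1, 1) (SIGMA k:{1..m}. {2..N k})"
    unfolding basis_def by auto
  then have "card basis = 1 + (\<Sum>k = 1..m. card {2..N k})"
    by (simp add: card_SigmaI)
  also have "(\<Sum>k = 1..m. card {2..N k}) = (\<Sum>k = 1..m. (n k - 2) div 2)"
    using n_eq_2N by (intro sum.cong) auto
  finally show ?thesis .
qed

end

theorem theorem3p5:
  fixes m :: nat and n :: "nat \<Rightarrow> nat"
  assumes "m \<ge> 2"
    and "\<forall>i\<in>{1..m}. even (n i) \<and> n i \<ge> 4"
  shows "sdim (chain_V m n) (chain_E m n) = 1 + (\<Sum>i=1..m. (n i - 2) div 2)"
proof -
  interpret even_chain_cycle m n
    using assms by unfold_locales auto
  have "sdim V E = card basis"
    unfolding sdim_def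
  proof (rule Least_equality)
    show "\<exists>W. strong_resolving_set V E W \<and> finite W \<and> card W = card basis"
      using strong_resolving_set_basis finite_subset[OF basis_subset_V finite_V] by blast
    show "card basis \<le> k" if "\<exists>W. strong_resolving_set V E W \<and> finite W \<and> card W = k" for k
      using that card_basis_le by blast
  qed
  then show ?thesis
    using card_basis by simp
qed

end
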